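(* Let $\mathcal{AF}_{\vdash}=(\vdash,\overline{\cdot},\widehat{\cdot})$ be a setting and let $\vdash^{\emptyset}$ be the restriction of $\vdash$ to pairs $(\Gamma,\gamma)$ for which there is no $(\emptyset,\delta)\in{\vdash}$ with $\delta\in\overline{\psi}$ for some $\psi\in\widehat{\Gamma}$. If the setting $(\vdash^{\emptyset},\overline{\cdot},\widehat{\cdot})$ satisfies Pre-Relevance, then for each $\mathsf{Sem}\in\{\mathsf{Grd},\mathsf{Prf}\}$ the relation $\mathrel{\mid\!\sim}^{\mathcal{AF}_{\vdash}}_{\mathsf{Sem}}$ satisfies Non-Interference: for all $\mathcal{S}_1\cup\{\phi\}\cup\mathcal{S}_2\subseteq\mathcal{L}$ with $(\mathcal{S}_1\cup\{\phi\})\mid\mathcal{S}_2$, $\mathcal{S}_1\mathrel{\mid\!\sim}^{\mathcal{AF}_{\vdash}}_{\mathsf{Sem}}\phi$ iff $\mathcal{S}_1\cup\mathcal{S}_2\mathrel{\mid\!\sim}^{\mathcal{AF}_{\vdash}}_{\mathsf{Sem}}\phi$.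
   Context: $\mathcal{L}$ is the set of formulas of a language built from propositional atoms; $\mathsf{Atoms}(\mathcal{S})$ is the set of atoms occurring in $\mathcal{S}$, and $\mathcal{S}_1\mid\mathcal{S}_2$ means $\mathsf{Atoms}(\mathcal{S}_1)\cap\mathsf{Atoms}(\mathcal{S}_2)=\emptyset$. A setting is $(\vdash,\overline{\cdot},\widehat{\cdot})$ with ${\vdash}\subseteq\wp_{\sf fin}(\mathcal{L})\times\mathcal{L}$ arbitrary, $\overline{\cdot}:\mathcal{L}\to\wp(\mathcal{L})$, $\widehat{\cdot}$ assigning to each nonempty finite set of formulas a finite set of formulas, with $\widehat{\emptyset}=\emptyset$. $\mathit{Arg}_{\vdash}(\mathcal{S})=\{(\Gamma,\gamma):\Gamma\subseteq\mathcal{S}\text{ finite},\Gamma\vdash\gamma\}$; in $\mathcal{AF}_{\vdash}(\mathcal{S})$, $(\Gamma,\gamma)$ attacks $(\Gamma',\gamma')$ iff $\gamma\in\overline{\phi}$ for some $\phi\in\widehat{\Gamma'}$. Dung semantics: conflict-free, defends, admissible, complete (admissible and contains all it defends), preferred ($\subseteq$-maximal complete), grounded ($\subseteq$-minimal complete). $\mathcal{S}\mathrel{\mid\!\sim}^{\mathcal{AF}}_{\mathsf{Sem}}\phi$ iff every $\mathsf{Sem}$-extension of $\mathcal{AF}(\mathcal{S})$ contains an argument with conclusion $\phi$. A setting satisfies Pre-Relevance iff (a) for all $\mathcal{S}_1,\mathcal{S}_2,\phi$ with $\mathcal{S}_1\cup\{\phi\}\mid\mathcal{S}_2$, $\mathcal{S}_1\cup\mathcal{S}_2\vdash\phi$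 implies $\mathcal{S}_1'\vdash\phi$ for some $\mathcal{S}_1'\subseteq\mathcal{S}_1$; (b) it is prime: for all sets of atoms $\mathcal{A}_1\mid\mathcal{A}_2$, all finite $\mathcal{S}_1,\mathcal{T}_1,\mathcal{S}_2,\mathcal{T}_2$ with $\mathsf{Atoms}(\mathcal{S}_i),\mathsf{Atoms}(\mathcal{T}_i)\subseteq\mathcal{A}_i$, and all $\phi,\psi$ with $\psi\in\overline{\phi}$, $\phi\in\widehat{\mathcal{T}_1\cup\mathcal{T}_2}$: if $\mathcal{S}_1\cup\mathcal{S}_2\vdash\psi$ then there are $i\in\{1,2\}$, $\mathcal{S}_i'\subseteq\mathcal{S}_i$, $\phi_i\in\widehat{\mathcal{T}_i}$, $\psi_i\in\overline{\phi_i}$ with $\mathcal{S}_i'\vdash\psi_i$; (c) $\widehat{\Delta}\subseteq\widehat{\Delta\cup\Delta'}$ for all finite $\Delta,\Delta'$. *)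

theory Defs
  imports Main
begin

definition Atoms :: "('f \<Rightarrow> 'a set) \<Rightarrow> 'f set \<Rightarrow> 'a set" where
  "Atoms atoms S = (\<Union>x\<in>S. atoms x)"

definition atom_disjoint :: "('f \<Rightarrow> 'a set) \<Rightarrow> 'f set \<Rightarrow> 'f set \<Rightarrow> bool" where
  "atom_disjoint atoms S1 S2 \<longleftrightarrow> Atoms atoms S1 \<inter> Atoms atoms S2 = {}"

(* A setting (|-, contrary, hat): |- relates finite sets to formulas,
   hat assigns finite sets to finite sets, hat {} = {} *)
definition is_setting ::
  "('f set \<Rightarrow> 'f \<Rightarrow> bool) \<Rightarrow> ('f \<Rightarrow> 'f set) \<Rightarrow> ('f set \<Rightarrow> 'f set) \<Rightarrow> bool" where
  "is_setting vd cb hat \<longleftrightarrow>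
     (\<forall>\<Gamma> \<gamma>. vd \<Gamma> \<gamma> \<longrightarrow> finite \<Gamma>) \<and>
     (\<forall>\<Delta>. finite \<Delta> \<longrightarrow> finite (hat \<Delta>)) \<and> hat {} = {}"

definition Arg :: "('f set \<Rightarrow> 'f \<Rightarrow> bool) \<Rightarrow> 'f set \<Rightarrow> ('f set \<times> 'f) set" where
  "Arg vd S = {(\<Gamma>, \<gamma>). \<Gamma> \<subseteq> S \<and> finite \<Gamma> \<and> vd \<Gamma> \<gamma>}"

definition attacks :: "('f \<Rightarrow> 'f set) \<Rightarrow> ('f set \<Rightarrow> 'f set) \<Rightarrow> 'f set \<times> 'f \<Rightarrow> 'f set \<times> 'f \<Rightarrow> bool" where
  "attacks cb hat a b \<longleftrightarrow> (\<exists>\<phi>\<in>hat (fst b). snd a \<in> cb \<phi>)"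

definition conflict_free :: "'x set \<Rightarrow> ('x \<Rightarrow> 'x \<Rightarrow> bool) \<Rightarrow> 'x set \<Rightarrow> bool" where
  "conflict_free A R E \<longleftrightarrow> E \<subseteq> A \<and> (\<forall>a\<in>E. \<forall>b\<in>E. \<not> R a b)"

definition defends :: "'x set \<Rightarrow> ('x \<Rightarrow> 'x \<Rightarrow> bool) \<Rightarrow> 'x set \<Rightarrow> 'x \<Rightarrow> bool" where
  "defends A R E a \<longleftrightarrow> (\<forall>b\<in>A. R b a \<longrightarrow> (\<exists>c\<in>E. R c b))"

definition admissible :: "'x set \<Rightarrow> ('x \<Rightarrow> 'x \<Rightarrow> bool) \<Rightarrow> 'x set \<Rightarrow> bool" where
  "admissible A R E \<longleftrightarrow> conflict_free A R E \<and> (\<forall>a\<in>E. defends A R E a)"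

definition complete_ext :: "'x set \<Rightarrow> ('x \<Rightarrow> 'x \<Rightarrow> bool) \<Rightarrow> 'x set \<Rightarrow> bool" where
  "complete_ext A R E \<longleftrightarrow> admissible A R E \<and> (\<forall>a\<in>A. defends A R E a \<longrightarrow> a \<in> E)"

definition preferred_ext :: "'x set \<Rightarrow> ('x \<Rightarrow> 'x \<Rightarrow> bool) \<Rightarrow> 'x set \<Rightarrow> bool" where
  "preferred_ext A R E \<longleftrightarrow> complete_ext A R E \<and>
     (\<forall>E'. complete_ext A R E' \<and> E \<subseteq> E' \<longrightarrow> E' = E)"

definition grounded_ext :: "'x set \<Rightarrow> ('x \<Rightarrow> 'x \<Rightarrow> bool) \<Rightarrow> 'x set \<Rightarrow> bool" where
  "grounded_ext A R E \<longleftrightarrow> complete_ext A R E \<and>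
     (\<forall>E'. complete_ext A R E' \<and> E' \<subseteq> E \<longrightarrow> E' = E)"

definition af_entails ::
  "(('f set \<times> 'f) set \<Rightarrow> (('f set \<times> 'f) \<Rightarrow> ('f set \<times> 'f) \<Rightarrow> bool) \<Rightarrow> ('f set \<times> 'f) set \<Rightarrow> bool)
   \<Rightarrow> ('f set \<Rightarrow> 'f \<Rightarrow> bool) \<Rightarrow> ('f \<Rightarrow> 'f set) \<Rightarrow> ('f set \<Rightarrow> 'f set) \<Rightarrow> 'f set \<Rightarrow> 'f \<Rightarrow> bool" where
  "af_entails Sem vd cb hat S \<phi> \<longleftrightarrow>
     (\<forall>E. Sem (Arg vd S) (attacks cb hat) E \<longrightarrow> (\<exists>a\<in>E. snd a = \<phi>))"

definition restrict_empty ::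
  "('f set \<Rightarrow> 'f \<Rightarrow> bool) \<Rightarrow> ('f \<Rightarrow> 'f set) \<Rightarrow> ('f set \<Rightarrow> 'f set) \<Rightarrow> 'f set \<Rightarrow> 'f \<Rightarrow> bool" where
  "restrict_empty vd cb hat \<Gamma> \<gamma> \<longleftrightarrow>
     vd \<Gamma> \<gamma> \<and> \<not> (\<exists>\<delta> \<psi>. vd {} \<delta> \<and> \<psi> \<in> hat \<Gamma> \<and> \<delta> \<in> cb \<psi>)"

definition prime_setting ::
  "('f \<Rightarrow> 'a set) \<Rightarrow> ('f set \<Rightarrow> 'f \<Rightarrow> bool) \<Rightarrow> ('f \<Rightarrow> 'f set) \<Rightarrow> ('f set \<Rightarrow> 'f set) \<Rightarrow> bool" where
  "prime_setting atoms vd cb hat \<longleftrightarrow>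
     (\<forall>A1 A2 S1 T1 S2 T2 \<phi> \<psi>.
        A1 \<inter> A2 = {} \<and> finite S1 \<and> finite T1 \<and> finite S2 \<and> finite T2 \<and>
        Atoms atoms S1 \<subseteq> A1 \<and> Atoms atoms T1 \<subseteq> A1 \<and>
        Atoms atoms S2 \<subseteq> A2 \<and> Atoms atoms T2 \<subseteq> A2 \<and>
        \<psi> \<in> cb \<phi> \<and> \<phi> \<in> hat (T1 \<union> T2) \<and> vd (S1 \<union> S2) \<psi> \<longrightarrow>
        (\<exists>S' \<phi>' \<psi>'. S' \<subseteq> S1 \<and> \<phi>' \<in> hat T1 \<and> \<psi>' \<in> cb \<phi>' \<and> vd S' \<psi>') \<or>
        (\<exists>S' \<phi>' \<psi>'. S' \<subseteq> S2 \<and> \<phi>' \<in> hat T2 \<and> \<psi>' \<in> cb \<phi>' \<and> vd S' \<psi>'))"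

definition pre_relevance ::
  "('f \<Rightarrow> 'a set) \<Rightarrow> ('f set \<Rightarrow> 'f \<Rightarrow> bool) \<Rightarrow> ('f \<Rightarrow> 'f set) \<Rightarrow> ('f set \<Rightarrow> 'f set) \<Rightarrow> bool" where
  "pre_relevance atoms vd cb hat \<longleftrightarrow>
     (\<forall>S1 S2 \<phi>. atom_disjoint atoms (S1 \<union> {\<phi>}) S2 \<longrightarrow> vd (S1 \<union> S2) \<phi> \<longrightarrow>
        (\<exists>S1'. S1' \<subseteq> S1 \<and> vd S1' \<phi>)) \<and>
     prime_setting atoms vd cb hat \<and>
     (\<forall>\<Delta> \<Delta>'. finite \<Delta> \<longrightarrow> finite \<Delta>' \<longrightarrow> hat \<Delta> \<subseteq> hat (\<Delta> \<union> \<Delta>'))"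

definition non_interference :: "('f \<Rightarrow> 'a set) \<Rightarrow> ('f set \<Rightarrow> 'f \<Rightarrow> bool) \<Rightarrow> bool" where
  "non_interference atoms ent \<longleftrightarrow>
     (\<forall>S1 S2 \<phi>. atom_disjoint atoms (S1 \<union> {\<phi>}) S2 \<longrightarrow>
        (ent S1 \<phi> \<longleftrightarrow> ent (S1 \<union> S2) \<phi>))"

end

theory Submission
  imports Defs
begin

(* Arguments with empty premises cannot be attacked, since hat {} = {}; so they lie in every
   complete extension and defeat every argument they attack.  Passing from \<turnstile> to
   \<turnstile>\<^sup>\<emptyset> removes exactly these defeated arguments and therefore leaves the
   complete extensions unchanged.

   For \<turnstile>\<^sup>\<emptyset>, primeness replaces an attack by an argument over S1 \<union> S2 on an
   argument over S1 with an attack from its premises in S1.  Since complete extensions are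
   closed under sub-arguments, the trace E \<inter> Arg(S1) of a complete extension E over S1 \<union> S2
   is complete over S1, and an admissible set over S1 stays admissible over S1 \<union> S2.  Hence
   the grounded extension over S1 is the trace of the one over S1 \<union> S2, and preferred
   extensions over S1 are exactly the traces of preferred ones over S1 \<union> S2.  Finally,
   relevance moves the premises of any argument for \<phi> in E into S1. *)

lemma defends_mono: "E \<subseteq> E' \<Longrightarrow> defends A R E a \<Longrightarrow> defends A R E' a"
  unfolding defends_def by blast

lemma defends_antimono_args: "A0 \<subseteq> A \<Longrightarrow> defends A R E a \<Longrightarrow> defends A0 R E a"
  unfolding defends_def by blast

lemma defendsD: "defends A R E a \<Longrightarrow> b \<in> A \<Longrightarrow> R b a \<Longrightarrow> \<exists>c\<in>E. R c b"
  unfolding defends_def by blast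

lemma admissibleD:
  assumes "admissible A R E"
  shows "E \<subseteq> A" "x \<in> E \<Longrightarrow> y \<in> E \<Longrightarrow> \<not> R x y" "a \<in> E \<Longrightarrow> defends A R E a"
  using assms unfolding admissible_def conflict_free_def by blast+

lemma admissibleI:
  assumes "E \<subseteq> A" "\<And>x y. x \<in> E \<Longrightarrow> y \<in> E \<Longrightarrow> \<not> R x y" "\<And>a. a \<in> E \<Longrightarrow> defends A R E a"
  shows "admissible A R E"
  using assms unfolding admissible_def conflict_free_def by blast

lemma complete_extD:
  assumes "complete_ext A R E"
  shows "admissible A R E" "a \<in> A \<Longrightarrow> defends A R E a \<Longrightarrow> a \<in> E"
  using assms unfolding complete_ext_def by blast+

lemma complete_extI:
  "admissible A R E \<Longrightarrow> (\<And>a. a \<in> A \<Longrightarrow> defends A R E a \<Longrightarrow> a \<in> E) \<Longrightarrow> complete_ext A R E"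
  unfolding complete_ext_def by blast

lemma admissible_insert:
  assumes adm: "admissible A R E" and "a \<in> A" "defends A R E a"
  shows "admissible A R (insert a E)"
proof -
  have sub: "insert a E \<subseteq> A"
    using admissibleD(1)[OF adm] \<open>a \<in> A\<close> by blast
  have def: "defends A R E x" if "x \<in> insert a E" for x
    using that admissibleD(3)[OF adm] \<open>defends A R E a\<close> by blast
  have conflict: "\<not> R x y" if xy: "x \<in> insert a E" "y \<in> insert a E" for x y
  proof
    assume "R x y"
    then obtain c where c: "c \<in> E" "R c x"
      using defendsD[OF def[OF xy(2)]] sub xy(1) by blast
    then obtain d where "d \<in> E" "R d c"
      using defendsD[OF def[OF xy(1)]] admissibleD(1)[OF adm] by blast
    then show False
      using admissibleD(2)[OF adm] c(1) by blast
  qed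
  show ?thesis
  proof (rule admissibleI[OF sub conflict])
    show "defends A R (insert a E) x" if "x \<in> insert a E" for x
      using subset_insertI def[OF that] by (rule defends_mono)
  qed
qed

definition maximal_admissible :: "'x set \<Rightarrow> ('x \<Rightarrow> 'x \<Rightarrow> bool) \<Rightarrow> 'x set \<Rightarrow> bool" where
  "maximal_admissible A R E \<longleftrightarrow>
     admissible A R E \<and> (\<forall>E'. admissible A R E' \<and> E \<subseteq> E' \<longrightarrow> E' = E)"

lemma maximal_admissible_imp_complete_ext:
  assumes "maximal_admissible A R E"
  shows "complete_ext A R E"
proof -
  have adm: "admissible A R E" and max: "\<And>E'. admissible A R E' \<Longrightarrow> E \<subseteq> E' \<Longrightarrow> E' = E"
    using assms unfolding maximal_admissible_def by blast+
  have "a \<in> E" if "a \<in> A" "defends A R E a" for a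
    using max[OF admissible_insert[OF adm that] subset_insertI] by blast
  with adm show ?thesis
    by (rule complete_extI)
qed

lemma admissible_extends_to_maximal:
  assumes "admissible A R E0"
  obtains M where "maximal_admissible A R M" "E0 \<subseteq> M"
proof -
  let ?Adm = "{E. admissible A R E \<and> E0 \<subseteq> E}"
  have chain_Union: "\<Union>C \<in> ?Adm" if "C \<noteq> {}" and chain: "subset.chain ?Adm C" for C
  proof -
    have adm: "\<And>E. E \<in> C \<Longrightarrow> admissible A R E" and "\<And>E. E \<in> C \<Longrightarrow> E0 \<subseteq> E"
      using chain unfolding subset_chain_def by blast+
    then have "E0 \<subseteq> \<Union>C"
      using \<open>C \<noteq> {}\<close> by blast
    moreover have "admissible A R (\<Union>C)"
    proof (rule admissibleI)
      show "\<Union>C \<subseteq> A"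
        using adm admissibleD(1) by blast
    next
      fix x y assume "x \<in> \<Union>C" "y \<in> \<Union>C"
      then obtain X Y where XY: "X \<in> C" "Y \<in> C" "x \<in> X" "y \<in> Y"
        by blast
      then have "X \<subseteq> Y \<or> Y \<subseteq> X"
        using chain by (simp add: subset_chain_def)
      then show "\<not> R x y"
        using XY admissibleD(2)[OF adm] by blast
    next
      fix a assume "a \<in> \<Union>C"
      then obtain E where E: "E \<in> C" "a \<in> E" by blast
      show "defends A R (\<Union>C) a"
        using Union_upper[OF E(1)] admissibleD(3)[OF adm[OF E(1)] E(2)] by (rule defends_mono)
    qed
    ultimately show ?thesis by simp
  qed
  have "?Adm \<noteq> {}"
    using assms by auto
  then have "\<exists>M\<in>?Adm. \<forall>X\<in>?Adm. M \<subseteq> X \<longrightarrow> X = M"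
    using chain_Union by (rule subset_Zorn_nonempty)
  then obtain M where M: "admissible A R M" "E0 \<subseteq> M"
    and max: "\<And>X. admissible A R X \<Longrightarrow> E0 \<subseteq> X \<Longrightarrow> M \<subseteq> X \<Longrightarrow> X = M"
    by auto
  have "maximal_admissible A R M"
    unfolding maximal_admissible_def using M max by auto
  then show ?thesis
    using M(2) by (rule that)
qed

lemma preferred_ext_iff_maximal_admissible:
  "preferred_ext A R E \<longleftrightarrow> maximal_admissible A R E"
proof
  assume "preferred_ext A R E"
  then have complete: "complete_ext A R E"
    and max: "\<And>E'. complete_ext A R E' \<Longrightarrow> E \<subseteq> E' \<Longrightarrow> E' = E"
    unfolding preferred_ext_def by blast+
  have "E' = E" if adm: "admissible A R E'" and sub: "E \<subseteq> E'" for E'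
  proof -
    obtain M where M: "maximal_admissible A R M" "E' \<subseteq> M"
      using admissible_extends_to_maximal[OF adm] by blast
    have "M = E"
      using max[OF maximal_admissible_imp_complete_ext[OF M(1)]] M(2) sub by blast
    then show ?thesis
      using M(2) sub by blast
  qed
  then show "maximal_admissible A R E"
    unfolding maximal_admissible_def using complete_extD(1)[OF complete] by blast
next
  assume max_adm: "maximal_admissible A R E"
  then have "E' = E" if "complete_ext A R E'" "E \<subseteq> E'" for E'
    using complete_extD(1)[OF that(1)] that(2) unfolding maximal_admissible_def by blast
  then show "preferred_ext A R E"
    unfolding preferred_ext_def using maximal_admissible_imp_complete_ext[OF max_adm] by blast
qed

lemma unattacked_mem_complete_ext:
  assumes "complete_ext A R E" "u \<in> A" "\<And>b. b \<in> A \<Longrightarrow> \<not> R b u"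
  shows "u \<in> E"
  using assms(1,2) by (rule complete_extD(2)) (use assms(3) in \<open>simp add: defends_def\<close>)

lemma attacked_by_unattacked_not_defended:
  assumes "u \<in> A" "R u a" "E \<subseteq> A" "\<And>b. b \<in> A \<Longrightarrow> \<not> R b u"
  shows "\<not> defends A R E a"
  using assms unfolding defends_def by blast

lemma defends_remove_defeated:
  assumes "A0 \<subseteq> A" "U \<subseteq> E" "\<And>a. a \<in> A \<Longrightarrow> a \<notin> A0 \<Longrightarrow> \<exists>u\<in>U. R u a"
  shows "defends A R E a \<longleftrightarrow> defends A0 R E a"
  using assms unfolding defends_def by blast

lemma admissible_remove_defeated:
  assumes "A0 \<subseteq> A" "U \<subseteq> E" "E \<subseteq> A0" "\<And>a. a \<in> A \<Longrightarrow> a \<notin> A0 \<Longrightarrow> \<exists>u\<in>U. R u a"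
  shows "admissible A R E \<longleftrightarrow> admissible A0 R E"
  using assms(1,3) defends_remove_defeated[where R = R, OF assms(1,2,4)]
  unfolding admissible_def conflict_free_def by auto

lemma complete_ext_remove_defeated:
  assumes "A0 \<subseteq> A" "U \<subseteq> A0"
    and unattacked: "\<And>u b. u \<in> U \<Longrightarrow> b \<in> A \<Longrightarrow> \<not> R b u"
    and defeated: "\<And>a. a \<in> A \<Longrightarrow> a \<notin> A0 \<Longrightarrow> \<exists>u\<in>U. R u a"
  shows "complete_ext A R E \<longleftrightarrow> complete_ext A0 R E"
proof
  assume complete: "complete_ext A R E"
  note adm = complete_extD(1)[OF complete]
  have U: "U \<subseteq> E"
    using unattacked_mem_complete_ext[OF complete] unattacked assms(1,2) by blast
  then have "E \<subseteq> A0"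
    using admissibleD(1,2)[OF adm] defeated by blast
  then have "admissible A0 R E"
    using adm admissible_remove_defeated[where R = R, OF assms(1) U _ defeated] by blast
  moreover note defends_remove_defeated[where R = R, OF assms(1) U defeated]
  ultimately show "complete_ext A0 R E"
    using complete_extD(2)[OF complete] assms(1) by (intro complete_extI) auto
next
  assume complete: "complete_ext A0 R E"
  note adm = complete_extD(1)[OF complete]
  have U: "U \<subseteq> E"
    using unattacked_mem_complete_ext[OF complete] unattacked assms(1,2) by blast
  note defends_iff = defends_remove_defeated[where R = R, OF assms(1) U defeated]
  have "admissible A R E"
    using adm admissible_remove_defeated[where R = R, OF assms(1) U admissibleD(1)[OF adm] defeated]
    by blast
  moreover have "a \<in> E" if a: "a \<in> A" "defends A R E a" for a
  proof -
    have "a \<in> A0"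
    proof (rule ccontr)
      assume "a \<notin> A0"
      then obtain u where "u \<in> U" "R u a"
        using defeated a(1) by blast
      then show False
        using attacked_by_unattacked_not_defended[of u A R a E] unattacked a(2)
          admissibleD(1)[OF adm] assms(1,2) by blast
    qed
    then show ?thesis
      using complete_extD(2)[OF complete] defends_iff a(2) by blast
  qed
  ultimately show "complete_ext A R E"
    by (rule complete_extI)
qed

definition char_fun :: "'x set \<Rightarrow> ('x \<Rightarrow> 'x \<Rightarrow> bool) \<Rightarrow> 'x set \<Rightarrow> 'x set" where
  "char_fun A R E = {a \<in> A. defends A R E a}"

lemma mono_char_fun: "mono (char_fun A R)"
  unfolding char_fun_def by (rule monoI) (blast dest: defends_mono)

lemma complete_ext_iff_conflict_free_fixpoint:
  "complete_ext A R E \<longleftrightarrow> conflict_free A R E \<and> char_fun A R E = E"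
  unfolding complete_ext_def admissible_def conflict_free_def char_fun_def by blast

lemma lfp_char_fun_subset_complete_ext:
  "complete_ext A R E \<Longrightarrow> lfp (char_fun A R) \<subseteq> E"
  by (rule lfp_lowerbound) (simp add: complete_ext_iff_conflict_free_fixpoint)

lemma complete_ext_lfp_char_fun: "complete_ext A R (lfp (char_fun A R))"
proof -
  have "admissible A R {}"
    by (rule admissibleI) auto
  then obtain M where "maximal_admissible A R M"
    using admissible_extends_to_maximal by blast
  then have "complete_ext A R M"
    by (rule maximal_admissible_imp_complete_ext)
  then have "lfp (char_fun A R) \<subseteq> M" "conflict_free A R M"
    using lfp_char_fun_subset_complete_ext complete_extD(1) admissible_def by blast+
  then have "conflict_free A R (lfp (char_fun A R))"
    unfolding conflict_free_def by blast
  moreover have "char_fun A R (lfp (char_fun A R)) = lfp (char_fun A R)"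
    by (rule lfp_fixpoint[OF mono_char_fun])
  ultimately show ?thesis
    unfolding complete_ext_iff_conflict_free_fixpoint ..
qed

lemma grounded_ext_iff_lfp: "grounded_ext A R E \<longleftrightarrow> E = lfp (char_fun A R)"
proof
  assume "grounded_ext A R E"
  then have complete: "complete_ext A R E"
    and least: "\<And>E'. complete_ext A R E' \<Longrightarrow> E' \<subseteq> E \<Longrightarrow> E' = E"
    unfolding grounded_ext_def by blast+
  show "E = lfp (char_fun A R)"
    using least[OF complete_ext_lfp_char_fun lfp_char_fun_subset_complete_ext[OF complete]] by simp
next
  have "E' = lfp (char_fun A R)"
    if "complete_ext A R E'" "E' \<subseteq> lfp (char_fun A R)" for E'
    using that(2) lfp_char_fun_subset_complete_ext[OF that(1)] by (rule subset_antisym)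
  then show "grounded_ext A R E" if "E = lfp (char_fun A R)"
    unfolding grounded_ext_def that using complete_ext_lfp_char_fun by blast
qed

lemma af_entails_grounded_iff:
  "af_entails grounded_ext vd cb hat S \<phi> \<longleftrightarrow>
     (\<exists>a\<in>lfp (char_fun (Arg vd S) (attacks cb hat)). snd a = \<phi>)"
  unfolding af_entails_def grounded_ext_iff_lfp by blast

lemma Atoms_mono: "X \<subseteq> Y \<Longrightarrow> Atoms atoms X \<subseteq> Atoms atoms Y"
  unfolding Atoms_def by blast

lemma atom_disjoint_mono:
  "atom_disjoint atoms S1 S2 \<Longrightarrow> X \<subseteq> S1 \<Longrightarrow> Y \<subseteq> S2 \<Longrightarrow> atom_disjoint atoms X Y"
  unfolding atom_disjoint_def Atoms_def by blast

definition set_attacks ::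
  "('f set \<Rightarrow> 'f \<Rightarrow> bool) \<Rightarrow> ('f \<Rightarrow> 'f set) \<Rightarrow> ('f set \<Rightarrow> 'f set) \<Rightarrow> 'f set \<Rightarrow> 'f set \<Rightarrow> bool" where
  "set_attacks vd cb hat X Y \<longleftrightarrow> (\<exists>S' \<phi>' \<psi>'. S' \<subseteq> X \<and> \<phi>' \<in> hat Y \<and> \<psi>' \<in> cb \<phi>' \<and> vd S' \<psi>')"

lemma set_attacks_mono:
  "set_attacks vd cb hat X Y \<Longrightarrow> X \<subseteq> X' \<Longrightarrow> set_attacks vd cb hat X' Y"
  unfolding set_attacks_def by blast

lemma prime_settingD:
  assumes "prime_setting atoms vd cb hat"
    "A1 \<inter> A2 = {}" "finite S1" "finite T1" "finite S2" "finite T2"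
    "Atoms atoms S1 \<subseteq> A1" "Atoms atoms T1 \<subseteq> A1" "Atoms atoms S2 \<subseteq> A2" "Atoms atoms T2 \<subseteq> A2"
    "\<psi> \<in> cb \<phi>" "\<phi> \<in> hat (T1 \<union> T2)" "vd (S1 \<union> S2) \<psi>"
  shows "set_attacks vd cb hat S1 T1 \<or> set_attacks vd cb hat S2 T2"
proof -
  have "\<forall>A1 A2 S1 T1 S2 T2 \<phi> \<psi>.
        A1 \<inter> A2 = {} \<and> finite S1 \<and> finite T1 \<and> finite S2 \<and> finite T2 \<and>
        Atoms atoms S1 \<subseteq> A1 \<and> Atoms atoms T1 \<subseteq> A1 \<and>
        Atoms atoms S2 \<subseteq> A2 \<and> Atoms atoms T2 \<subseteq> A2 \<and>
        \<psi> \<in> cb \<phi> \<and> \<phi> \<in> hat (T1 \<union> T2) \<and> vd (S1 \<union> S2) \<psi> \<longrightarrow>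
        set_attacks vd cb hat S1 T1 \<or> set_attacks vd cb hat S2 T2"
    using assms(1) unfolding prime_setting_def set_attacks_def .
  then show ?thesis
    using assms(2-) by blast
qed

lemma Arg_finite: "a \<in> Arg vd X \<Longrightarrow> finite (fst a)"
  unfolding Arg_def by auto

locale pre_relevant_setting =
  fixes atoms :: "'f \<Rightarrow> 'a set"
    and vd :: "'f set \<Rightarrow> 'f \<Rightarrow> bool"
    and cb :: "'f \<Rightarrow> 'f set"
    and hat :: "'f set \<Rightarrow> 'f set"
  assumes finite_premises: "vd \<Gamma> \<gamma> \<Longrightarrow> finite \<Gamma>"
    and hat_empty: "hat {} = {}"
    and pre_relevance: "pre_relevance atoms vd cb hat"
begin

abbreviation att :: "'f set \<times> 'f \<Rightarrow> 'f set \<times> 'f \<Rightarrow> bool" where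
  "att \<equiv> attacks cb hat"

lemma relevance:
  "atom_disjoint atoms (T1 \<union> {\<psi>}) T2 \<Longrightarrow> vd (T1 \<union> T2) \<psi> \<Longrightarrow> \<exists>T' \<subseteq> T1. vd T' \<psi>"
  using pre_relevance unfolding pre_relevance_def by blast

lemma hat_mono: "finite Y \<Longrightarrow> X \<subseteq> Y \<Longrightarrow> hat X \<subseteq> hat Y"
  using pre_relevance finite_subset[of X Y] Un_absorb1[of X Y]
  unfolding pre_relevance_def by metis

lemma set_attacks_empty: "\<not> set_attacks vd cb hat X {}"
  unfolding set_attacks_def hat_empty by blast

lemma set_attacks_split:
  assumes disjoint: "atom_disjoint atoms (X1 \<union> Y1) (X2 \<union> Y2)"
    and finite: "finite Y1" "finite Y2"
    and "set_attacks vd cb hat (X1 \<union> X2) (Y1 \<union> Y2)"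
  shows "set_attacks vd cb hat X1 Y1 \<or> set_attacks vd cb hat X2 Y2"
proof -
  obtain S \<phi> \<psi> where S: "S \<subseteq> X1 \<union> X2" "\<phi> \<in> hat (Y1 \<union> Y2)" "\<psi> \<in> cb \<phi>" "vd S \<psi>"
    using assms(4) unfolding set_attacks_def by blast
  have "finite S"
    using S(4) by (rule finite_premises)
  then have finite_parts: "finite (S \<inter> X1)" "finite (S - X1)"
    by simp_all
  have "vd ((S \<inter> X1) \<union> (S - X1)) \<psi>"
    using S(4) by (simp add: Int_Diff_Un)
  moreover have "Atoms atoms (S \<inter> X1) \<subseteq> Atoms atoms (X1 \<union> Y1)"
    "Atoms atoms Y1 \<subseteq> Atoms atoms (X1 \<union> Y1)"
    "Atoms atoms (S - X1) \<subseteq> Atoms atoms (X2 \<union> Y2)" "Atoms atoms Y2 \<subseteq> Atoms atoms (X2 \<union> Y2)"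
    using S(1) by (auto intro!: Atoms_mono)
  moreover have "prime_setting atoms vd cb hat"
    using pre_relevance unfolding pre_relevance_def by blast
  ultimately have "set_attacks vd cb hat (S \<inter> X1) Y1 \<or> set_attacks vd cb hat (S - X1) Y2"
    using prime_settingD disjoint[unfolded atom_disjoint_def] finite_parts finite S(2,3) by metis
  moreover have "S \<inter> X1 \<subseteq> X1" "S - X1 \<subseteq> X2"
    using S(1) by blast+
  ultimately show ?thesis
    using set_attacks_mono by blast
qed

lemma attacks_imp_set_attacks:
  "vd (fst a) (snd a) \<Longrightarrow> att a b \<Longrightarrow> set_attacks vd cb hat (fst a) (fst b)"
  unfolding attacks_def set_attacks_def by (meson order_refl)

lemma set_attacksE:
  assumes "set_attacks vd cb hat X (fst b)"
  obtains a where "fst a \<subseteq> X" "vd (fst a) (snd a)" "att a b"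
proof -
  obtain S \<phi> \<psi> where S: "S \<subseteq> X" "\<phi> \<in> hat (fst b)" "\<psi> \<in> cb \<phi>" "vd S \<psi>"
    using assms unfolding set_attacks_def by blast
  then have "att (S, \<psi>) b"
    unfolding attacks_def by auto
  then show ?thesis
    using that[of "(S, \<psi>)"] S by simp
qed

lemma attacks_premises_mono: "att c a \<Longrightarrow> fst a \<subseteq> fst b \<Longrightarrow> finite (fst b) \<Longrightarrow> att c b"
  unfolding attacks_def using hat_mono by blast

lemma complete_ext_subargument_closed:
  assumes complete: "complete_ext (Arg vd X) att E"
    and "b \<in> E" "a \<in> Arg vd X" "fst a \<subseteq> fst b"
  shows "a \<in> E"
proof -
  have adm: "admissible (Arg vd X) att E"
    using complete by (rule complete_extD(1))
  have "finite (fst b)"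
    using admissibleD(1)[OF adm] \<open>b \<in> E\<close> Arg_finite by blast
  then have "defends (Arg vd X) att E a"
    using defendsD[OF admissibleD(3)[OF adm \<open>b \<in> E\<close>]] attacks_premises_mono \<open>fst a \<subseteq> fst b\<close>
    unfolding defends_def by blast
  then show ?thesis
    using complete_extD(2)[OF complete \<open>a \<in> Arg vd X\<close>] by blast
qed

end

locale pre_relevant_split = pre_relevant_setting +
  fixes S1 S2
  assumes S1_S2_disjoint: "atom_disjoint atoms S1 S2"
begin

abbreviation args1 where
  "args1 \<equiv> Arg vd S1"

abbreviation args where
  "args \<equiv> Arg vd (S1 \<union> S2)"

lemma args1_subset: "args1 \<subseteq> args"
  unfolding Arg_def by blast

lemma attack_localise:
  assumes "b \<in> args" "a \<in> args1" "att b a"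
  obtains a' where "a' \<in> args1" "fst a' \<subseteq> fst b" "att a' a"
proof -
  have b: "fst b \<subseteq> S1 \<union> S2" "vd (fst b) (snd b)" and a: "fst a \<subseteq> S1" "finite (fst a)"
    using assms(1,2) unfolding Arg_def by auto
  \<comment> \<open>split the target as well, into \<open>fst a\<close> and the empty set, which nothing attacks\<close>
  have "set_attacks vd cb hat (fst b \<inter> S1 \<union> (fst b - S1)) (fst a \<union> {})"
    using attacks_imp_set_attacks[OF b(2) assms(3)] by (simp add: Int_Diff_Un)
  moreover have "atom_disjoint atoms (fst b \<inter> S1 \<union> fst a) (fst b - S1 \<union> {})"
    using b(1) a(1) by (intro atom_disjoint_mono[OF S1_S2_disjoint]) auto
  ultimately have "set_attacks vd cb hat (fst b \<inter> S1) (fst a)"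
    using set_attacks_split a(2) set_attacks_empty by blast
  then obtain a' where "fst a' \<subseteq> fst b \<inter> S1" "vd (fst a') (snd a')" "att a' a"
    by (rule set_attacksE)
  moreover from this have "a' \<in> args1"
    using finite_premises unfolding Arg_def by auto
  ultimately show ?thesis
    using that by blast
qed

lemma defends_args1_iff:
  assumes "a \<in> args1"
  shows "defends args att E a \<longleftrightarrow> defends args1 att E a"
proof
  assume "defends args att E a"
  then show "defends args1 att E a"
    using args1_subset by (rule defends_antimono_args[rotated])
next
  assume defends1: "defends args1 att E a"
  show "defends args att E a"
    unfolding defends_def
  proof (intro ballI impI)
    fix b assume b: "b \<in> args" "att b a"
    obtain a' where a': "a' \<in> args1" "fst a' \<subseteq> fst b" "att a' a"
      using b(1) assms b(2) by (rule attack_localise)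
    then obtain c where "c \<in> E" "att c a'"
      using defendsD[OF defends1] by blast
    moreover have "finite (fst b)"
      using \<open>b \<in> args\<close> by (rule Arg_finite)
    ultimately show "\<exists>c\<in>E. att c b"
      using attacks_premises_mono a'(2) by blast
  qed
qed

lemma complete_ext_localise_attack:
  assumes complete: "complete_ext args att E" and "d \<in> E" "a \<in> args1" "att d a"
  obtains a' where "a' \<in> E \<inter> args1" "att a' a"
proof -
  have "d \<in> args"
    using admissibleD(1)[OF complete_extD(1)[OF complete]] \<open>d \<in> E\<close> by blast
  then obtain a' where a': "a' \<in> args1" "fst a' \<subseteq> fst d" "att a' a"
    using assms(3,4) by (rule attack_localise)
  then have "a' \<in> E"
    using complete_ext_subargument_closed[OF complete \<open>d \<in> E\<close>] args1_subset by blast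
  then show ?thesis
    using that a' by blast
qed

lemma complete_ext_defends_restrict_iff:
  assumes complete: "complete_ext args att E" and "a \<in> args1"
  shows "defends args att E a \<longleftrightarrow> defends args1 att (E \<inter> args1) a"
proof
  assume defends: "defends args att E a"
  show "defends args1 att (E \<inter> args1) a"
    unfolding defends_def
  proof (intro ballI impI)
    fix b assume "b \<in> args1" "att b a"
    then obtain d where "d \<in> E" "att d b"
      using defendsD[OF defends] args1_subset by blast
    then obtain a' where "a' \<in> E \<inter> args1" "att a' b"
      using complete \<open>b \<in> args1\<close> by (metis complete_ext_localise_attack)
    then show "\<exists>c\<in>E \<inter> args1. att c b" by blast
  qed
next
  assume "defends args1 att (E \<inter> args1) a"
  then have "defends args1 att E a"
    by (rule defends_mono[rotated]) blast
  then show "defends args att E a"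
    using defends_args1_iff[OF \<open>a \<in> args1\<close>] by blast
qed

lemma complete_ext_restrict:
  assumes complete: "complete_ext args att E"
  shows "complete_ext args1 att (E \<inter> args1)"
proof (rule complete_extI)
  note adm = complete_extD(1)[OF complete]
  note defends_iff = complete_ext_defends_restrict_iff[OF complete]
  show "admissible args1 att (E \<inter> args1)"
  proof (rule admissibleI)
    show "\<not> att x y" if "x \<in> E \<inter> args1" "y \<in> E \<inter> args1" for x y
      using admissibleD(2)[OF adm] that by blast
    show "defends args1 att (E \<inter> args1) a" if "a \<in> E \<inter> args1" for a
      using admissibleD(3)[OF adm] defends_iff that by blast
  qed blast
next
  fix a assume "a \<in> args1" "defends args1 att (E \<inter> args1) a"
  then show "a \<in> E \<inter> args1"
    using complete_extD(2)[OF complete] complete_ext_defends_restrict_iff[OF complete] args1_subset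
    by blast
qed

lemma admissible_lift:
  assumes adm: "admissible args1 att E1"
  shows "admissible args att E1"
proof (rule admissibleI)
  show "E1 \<subseteq> args"
    using admissibleD(1)[OF adm] args1_subset by blast
  show "\<not> att x y" if "x \<in> E1" "y \<in> E1" for x y
    using admissibleD(2)[OF adm that] .
  show "defends args att E1 a" if "a \<in> E1" for a
    using admissibleD(1,3)[OF adm] defends_args1_iff that by blast
qed

lemma admissible_Un:
  assumes complete: "complete_ext args att E"
    and adm1: "admissible args1 att E1" and "E \<inter> args1 \<subseteq> E1"
  shows "admissible args att (E \<union> E1)"
proof -
  have adm: "admissible args att E"
    using complete by (rule complete_extD(1))
  note adm1' = admissible_lift[OF adm1]
  have no_attack: "\<not> att d x" if "d \<in> E" "x \<in> E1" for d x
  proof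
    assume "att d x"
    moreover have "x \<in> args1"
      using admissibleD(1)[OF adm1] \<open>x \<in> E1\<close> by blast
    ultimately obtain a' where "a' \<in> E \<inter> args1" "att a' x"
      using complete \<open>d \<in> E\<close> by (metis complete_ext_localise_attack)
    then show False
      using admissibleD(2)[OF adm1] \<open>x \<in> E1\<close> \<open>E \<inter> args1 \<subseteq> E1\<close> by blast
  qed
  \<comment> \<open>an attack from \<open>E1\<close> on \<open>E\<close> would be counter-attacked from \<open>E\<close>\<close>
  have no_counter_attack: "\<not> att x y" if "x \<in> E1" "y \<in> E" for x y
    using defendsD[OF admissibleD(3)[OF adm \<open>y \<in> E\<close>]] admissibleD(1)[OF adm1'] no_attack that
    by blast
  show ?thesis
  proof (rule admissibleI)
    show "E \<union> E1 \<subseteq> args"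
      using admissibleD(1)[OF adm] admissibleD(1)[OF adm1'] by blast
    show "\<not> att x y" if "x \<in> E \<union> E1" "y \<in> E \<union> E1" for x y
      using that admissibleD(2)[OF adm] admissibleD(2)[OF adm1] no_attack no_counter_attack
      by blast
    show "defends args att (E \<union> E1) a" if "a \<in> E \<union> E1" for a
      using that admissibleD(3)[OF adm] admissibleD(3)[OF adm1'] defends_mono[of _ "E \<union> E1"]
      by blast
  qed
qed

lemma preferred_ext_restrict:
  assumes "preferred_ext args att E"
  shows "preferred_ext args1 att (E \<inter> args1)"
proof -
  have max: "maximal_admissible args att E"
    using assms preferred_ext_iff_maximal_admissible by blast
  then have complete: "complete_ext args att E"
    by (rule maximal_admissible_imp_complete_ext)
  have "E' = E \<inter> args1" if "admissible args1 att E'" "E \<inter> args1 \<subseteq> E'" for E'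
  proof -
    have "E \<union> E' = E"
      using max admissible_Un[OF complete that] unfolding maximal_admissible_def by blast
    then show ?thesis
      using admissibleD(1)[OF that(1)] that(2) by blast
  qed
  then have "maximal_admissible args1 att (E \<inter> args1)"
    using complete_extD(1)[OF complete_ext_restrict[OF complete]]
    unfolding maximal_admissible_def by blast
  then show ?thesis
    using preferred_ext_iff_maximal_admissible by blast
qed

lemma preferred_ext_extend:
  assumes preferred: "preferred_ext args1 att E1"
  obtains E where "preferred_ext args att E" "E \<inter> args1 = E1"
proof -
  have adm1: "admissible args1 att E1"
    using preferred complete_extD(1) unfolding preferred_ext_def by blast
  obtain E where max: "maximal_admissible args att E" and "E1 \<subseteq> E"
    using admissible_extends_to_maximal[OF admissible_lift[OF adm1]] by blast
  have "complete_ext args1 att (E \<inter> args1)"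
    using complete_ext_restrict[OF maximal_admissible_imp_complete_ext[OF max]] .
  moreover have "E1 \<subseteq> E \<inter> args1"
    using \<open>E1 \<subseteq> E\<close> admissibleD(1)[OF adm1] by blast
  ultimately have "E \<inter> args1 = E1"
    using preferred unfolding preferred_ext_def by blast
  moreover have "preferred_ext args att E"
    using max preferred_ext_iff_maximal_admissible by blast
  ultimately show ?thesis
    using that by blast
qed

definition S1_grounded where
  "S1_grounded = {b \<in> args. \<forall>a\<in>args1. fst a \<subseteq> fst b \<longrightarrow> a \<in> lfp (char_fun args1 att)}"

lemma char_fun_S1_grounded: "char_fun args att S1_grounded \<subseteq> S1_grounded"
proof
  let ?G1 = "lfp (char_fun args1 att)"
  fix b assume "b \<in> char_fun args att S1_grounded"
  then have b: "b \<in> args" "defends args att S1_grounded b"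
    unfolding char_fun_def by auto
  have "a \<in> ?G1" if a: "a \<in> args1" "fst a \<subseteq> fst b" for a
  proof -
    have "defends args1 att ?G1 a"
      unfolding defends_def
    proof (intro ballI impI)
      fix c assume c: "c \<in> args1" "att c a"
      then have "att c b"
        using attacks_premises_mono a(2) Arg_finite[OF b(1)] by blast
      then obtain d where d: "d \<in> S1_grounded" "att d c"
        using defendsD[OF b(2)] c(1) args1_subset by blast
      then have "d \<in> args"
        unfolding S1_grounded_def by blast
      then obtain d' where "d' \<in> args1" "fst d' \<subseteq> fst d" "att d' c"
        using c(1) d(2) by (rule attack_localise)
      then show "\<exists>e\<in>?G1. att e c"
        using d(1) unfolding S1_grounded_def by blast
    qed
    then show ?thesis
      using complete_extD(2)[OF complete_ext_lfp_char_fun a(1)] by blast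
  qed
  then show "b \<in> S1_grounded"
    unfolding S1_grounded_def using b(1) by blast
qed

lemma lfp_char_fun_restrict: "lfp (char_fun args att) \<inter> args1 = lfp (char_fun args1 att)"
proof
  show "lfp (char_fun args1 att) \<subseteq> lfp (char_fun args att) \<inter> args1"
    using complete_ext_restrict[OF complete_ext_lfp_char_fun]
    by (rule lfp_char_fun_subset_complete_ext)
  have "lfp (char_fun args att) \<subseteq> S1_grounded"
    using char_fun_S1_grounded by (rule lfp_lowerbound)
  then show "lfp (char_fun args att) \<inter> args1 \<subseteq> lfp (char_fun args1 att)"
    unfolding S1_grounded_def by blast
qed

lemma complete_ext_relevant_conclusion:
  assumes complete: "complete_ext args att E" and disjoint: "atom_disjoint atoms (S1 \<union> {\<phi>}) S2"
    and "a \<in> E" "snd a = \<phi>"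
  obtains a' where "a' \<in> E \<inter> args1" "snd a' = \<phi>"
proof -
  have "a \<in> args"
    using admissibleD(1)[OF complete_extD(1)[OF complete]] \<open>a \<in> E\<close> by blast
  then have a: "fst a \<subseteq> S1 \<union> S2" "vd (fst a) \<phi>"
    using \<open>snd a = \<phi>\<close> unfolding Arg_def by auto
  have "atom_disjoint atoms ((fst a \<inter> S1) \<union> {\<phi>}) (fst a - S1)"
    using a(1) by (intro atom_disjoint_mono[OF disjoint]) auto
  moreover have "vd ((fst a \<inter> S1) \<union> (fst a - S1)) \<phi>"
    using a(2) by (simp add: Int_Diff_Un)
  ultimately obtain \<Gamma> where \<Gamma>: "\<Gamma> \<subseteq> fst a \<inter> S1" "vd \<Gamma> \<phi>"
    by (blast dest: relevance)
  then have "(\<Gamma>, \<phi>) \<in> args1"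
    using finite_premises unfolding Arg_def by auto
  moreover from this have "(\<Gamma>, \<phi>) \<in> E"
    using complete_ext_subargument_closed[OF complete \<open>a \<in> E\<close>] args1_subset \<Gamma>(1) by auto
  ultimately show ?thesis
    using that by auto
qed

lemma grounded_non_interference:
  assumes "atom_disjoint atoms (S1 \<union> {\<phi>}) S2"
  shows "af_entails grounded_ext vd cb hat S1 \<phi> \<longleftrightarrow> af_entails grounded_ext vd cb hat (S1 \<union> S2) \<phi>"
  unfolding af_entails_grounded_iff lfp_char_fun_restrict[symmetric]
  using complete_ext_relevant_conclusion[OF complete_ext_lfp_char_fun assms] by blast

lemma preferred_non_interference:
  assumes "atom_disjoint atoms (S1 \<union> {\<phi>}) S2"
  shows "af_entails preferred_ext vd cb hat S1 \<phi> \<longleftrightarrow> af_entails preferred_ext vd cb hat (S1 \<union> S2) \<phi>"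
proof
  assume "af_entails preferred_ext vd cb hat S1 \<phi>"
  then show "af_entails preferred_ext vd cb hat (S1 \<union> S2) \<phi>"
    unfolding af_entails_def using preferred_ext_restrict by blast
next
  assume entails: "af_entails preferred_ext vd cb hat (S1 \<union> S2) \<phi>"
  show "af_entails preferred_ext vd cb hat S1 \<phi>"
    unfolding af_entails_def
  proof (intro allI impI)
    fix E1 assume "preferred_ext args1 att E1"
    then obtain E where E: "preferred_ext args att E" "E \<inter> args1 = E1"
      by (rule preferred_ext_extend)
    then obtain a where "a \<in> E" "snd a = \<phi>"
      using entails unfolding af_entails_def by blast
    moreover have "complete_ext args att E"
      using E(1) unfolding preferred_ext_def by blast
    ultimately obtain a' where "a' \<in> E \<inter> args1" "snd a' = \<phi>"
      using complete_ext_relevant_conclusion assms by blast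
    then show "\<exists>a\<in>E1. snd a = \<phi>"
      using E(2) by blast
  qed
qed

end

context pre_relevant_setting
begin

lemma non_interference_grounded: "non_interference atoms (af_entails grounded_ext vd cb hat)"
  unfolding non_interference_def
proof (intro allI impI)
  fix S1 S2 \<phi> assume disjoint: "atom_disjoint atoms (S1 \<union> {\<phi>}) S2"
  then interpret pre_relevant_split atoms vd cb hat S1 S2
    by unfold_locales (rule atom_disjoint_mono, auto)
  show "af_entails grounded_ext vd cb hat S1 \<phi> \<longleftrightarrow> af_entails grounded_ext vd cb hat (S1 \<union> S2) \<phi>"
    using disjoint by (rule grounded_non_interference)
qed

lemma non_interference_preferred: "non_interference atoms (af_entails preferred_ext vd cb hat)"
  unfolding non_interference_def
proof (intro allI impI)
  fix S1 S2 \<phi> assume disjoint: "atom_disjoint atoms (S1 \<union> {\<phi>}) S2"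
  then interpret pre_relevant_split atoms vd cb hat S1 S2
    by unfold_locales (rule atom_disjoint_mono, auto)
  show "af_entails preferred_ext vd cb hat S1 \<phi> \<longleftrightarrow> af_entails preferred_ext vd cb hat (S1 \<union> S2) \<phi>"
    using disjoint by (rule preferred_non_interference)
qed

end

lemma complete_ext_restrict_empty:
  assumes "hat {} = {}"
  shows "complete_ext (Arg vd S) (attacks cb hat) =
         complete_ext (Arg (restrict_empty vd cb hat) S) (attacks cb hat)"
proof
  fix E
  let ?U = "{({}, \<delta>) | \<delta>. vd {} \<delta>}"
  show "complete_ext (Arg vd S) (attacks cb hat) E =
        complete_ext (Arg (restrict_empty vd cb hat) S) (attacks cb hat) E"
  proof (rule complete_ext_remove_defeated)
    show "Arg (restrict_empty vd cb hat) S \<subseteq> Arg vd S"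
      unfolding Arg_def restrict_empty_def by blast
    show "?U \<subseteq> Arg (restrict_empty vd cb hat) S"
      using assms unfolding Arg_def restrict_empty_def by auto
    show "\<not> attacks cb hat b u" if "u \<in> ?U" for u b
      using that assms unfolding attacks_def by auto
    show "\<exists>u\<in>?U. attacks cb hat u a"
      if "a \<in> Arg vd S" "a \<notin> Arg (restrict_empty vd cb hat) S" for a
      using that unfolding Arg_def restrict_empty_def attacks_def by fastforce
  qed
qed

lemma af_entails_restrict_empty:
  assumes "hat {} = {}"
  shows "af_entails grounded_ext vd cb hat =
         af_entails grounded_ext (restrict_empty vd cb hat) cb hat"
    and "af_entails preferred_ext vd cb hat =
         af_entails preferred_ext (restrict_empty vd cb hat) cb hat"
  unfolding af_entails_def grounded_ext_def preferred_ext_def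
    complete_ext_restrict_empty[where vd = vd and hat = hat, OF assms]
  by (rule refl)+

theorem corollary1:
  fixes atoms :: "'f \<Rightarrow> 'a set"
    and vd :: "'f set \<Rightarrow> 'f \<Rightarrow> bool"
    and cb :: "'f \<Rightarrow> 'f set"
    and hat :: "'f set \<Rightarrow> 'f set"
  assumes "is_setting vd cb hat"
    and "pre_relevance atoms (restrict_empty vd cb hat) cb hat"
  shows "non_interference atoms (af_entails grounded_ext vd cb hat)
       \<and> non_interference atoms (af_entails preferred_ext vd cb hat)"
proof -
  have hat_empty: "hat {} = {}"
    using assms(1) unfolding is_setting_def by blast
  interpret pre_relevant_setting atoms "restrict_empty vd cb hat" cb hat
  proof
    show "finite \<Gamma>" if "restrict_empty vd cb hat \<Gamma> \<gamma>" for \<Gamma> \<gamma>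
      using that assms(1) unfolding restrict_empty_def is_setting_def by blast
  qed (fact hat_empty assms(2))+
  show ?thesis
    using non_interference_grounded non_interference_preferred
    unfolding af_entails_restrict_empty[where vd = vd and hat = hat, OF hat_empty] ..
qed

end
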